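(* Consider the stochastic-follower setting (defined in the context), and run the following algorithm with an arbitrary estimation procedure: at each round $t$ the leader holds, for every $(\mathbf{z},\mathbf{x})$, an estimated probability vector $\widehat{\mathbf{p}}_t(\mathbf{z},\mathbf{x})=[\widehat{p}_t(b_{f_t}(\mathbf{z},\mathbf{x})=a_f)]_{a_f\in\mathcal{A}_f}$ computed from $f_1,\ldots,f_{t-1}$; upon observing $\mathbf{z}_t$ it commits to $\mathbf{x}_t=\pi_t(\mathbf{z}_t)\in\arg\max_{\mathbf{x}\in\mathcal{E}_{\mathbf{z}_t}}\sum_{a_f\in\mathcal{A}_f}u(\mathbf{z}_t,\mathbf{x},a_f)\,\widehat{p}_t(b_{f_t}(\mathbf{z}_t,\mathbf{x})=a_f)$, then observes $f_t$ and updates its estimate. Let $\mathbf{p}(\mathbf{z},\mathbf{x})=[\Pr_{f\sim\mathcal{F}}(b_f(\mathbf{z},\mathbf{x})=a_f)]_{a_f\in\mathcal{A}_f}$, and let $\pi^{(\mathcal{E})}$ be a policy with $\pi^{(\mathcal{E})}(\mathbf{z})\in\mathcal{E}_{\mathbf{z}}$ for all $\mathbf{z}$ such that $\sum_{t=1}^T\mathbb{E}_{f_t\sim\mathcal{F}}[u(\mathbf{z}_t,\pi^*(\mathbf{z}_t),b_{f_t}(\mathbf{z}_t,\pi^*(\mathbf{z}_t)))-u(\mathbf{z}_t,\pi^{(\mathcal{E})}(\mathbf{z}_t),b_{f_t}(\mathbf{z}_t,\pi^{(\mathcal{E})}(\mathbf{z}_t)))]\le 1$. Then the expected contextual Stackelberg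 regret satisfies $$\mathbb{E}[R(T)]\le 1+2\sum_{t=1}^T\mathbb{E}_{f_1,\ldots,f_{t-1}}\Big[\mathrm{TV}\big(\mathbf{p}(\mathbf{z}_t,\pi^{(\mathcal{E})}(\mathbf{z}_t)),\widehat{\mathbf{p}}_t(\mathbf{z}_t,\pi^{(\mathcal{E})}(\mathbf{z}_t))\big)+\mathrm{TV}\big(\mathbf{p}(\mathbf{z}_t,\pi_t(\mathbf{z}_t)),\widehat{\mathbf{p}}_t(\mathbf{z}_t,\pi_t(\mathbf{z}_t))\big)\Big].$$
   Context: Game: finite leader actions $\mathcal{A}$, finite follower actions $\mathcal{A}_f$, contexts $\mathcal{Z}\subseteq\mathbb{R}^d$, follower types $\alpha^{(1)},\ldots,\alpha^{(K)}$ ($K\le T$) with known utilities $u_{\alpha^{(i)}}:\mathcal{Z}\times\mathcal{A}\times\mathcal{A}_f\to[0,1]$, known leader utility $u:\mathcal{Z}\times\mathcal{A}\times\mathcal{A}_f\to[0,1]$, mixed strategies $\mathbf{x}\in\Delta(\mathcal{A})$, $u(\mathbf{z},\mathbf{x},a_f)=\sum_{a_l}\mathbf{x}[a_l]u(\mathbf{z},a_l,a_f)$; best response $b_f(\mathbf{z},\mathbf{x})\in\arg\max_{a_f}\sum_{a_l}\mathbf{x}[a_l]u_f(\mathbf{z},a_l,a_f)$ with ties broken by a fixed known ordering. Best-response regions: $\mathcal{X}_{\mathbf{z}}(\sigma)=\{\mathbf{x}: b_{\alpha^{(i)}}(\mathbf{z},\mathbf{x})=\sigma(\alpha^{(i)})\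 \forall i\}$ for $\sigma:\{\alpha^{(1)},\ldots,\alpha^{(K)}\}\to\mathcal{A}_f$. $\mathcal{E}_{\mathbf{z}}$ is a set of $\delta$-approximate extreme points ($\delta\le1/T$): for every $\sigma$ with $\mathcal{X}_{\mathbf{z}}(\sigma)\ne\emptyset$ and every extreme point $\mathbf{x}$ of $\mathrm{cl}(\mathcal{X}_{\mathbf{z}}(\sigma))$, either $\mathbf{x}\in\mathcal{X}_{\mathbf{z}}(\sigma)$ and $\mathbf{x}\in\mathcal{E}_{\mathbf{z}}$, or some $\mathbf{x}'\in\mathcal{E}_{\mathbf{z}}\cap\mathcal{X}_{\mathbf{z}}(\sigma)$ has $\|\mathbf{x}'-\mathbf{x}\|_1\le\delta$. Stochastic-follower setting: $f_1,\ldots,f_T$ are drawn i.i.d. from an unknown distribution $\mathcal{F}$ over types; the contexts are chosen by a (possibly adaptive) adversary which, when choosing $\mathbf{z}_t$, knows $\mathcal{F}$, the algorithm and $f_1,\ldots,f_{t-1}$ but not $f_t$. The leader observes $f_t$ after round $t$. Expected contextual Stackelberg regret: $\mathbb{E}[R(T)]=\mathbb{E}_{f_1,\ldots,f_T\sim\mathcal{F}}\big[\sum_t u(\mathbf{z}_t,\pi^*(\mathbf{z}_t),b_{f_t}(\mathbf{z}_t,\pi^*(\mathbf{z}_t)))-u(\mathbf{z}_t,\mathbf{x}_t,b_{f_t}(\mathbf{z}_t,\mathbf{x}_t))\big]$, where $\pi^*$ is the optimal policy given knowledge of $\mathbf{z}_1,\ldots,\mathbf{z}_T$ and $\mathcal{F}$.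 $\mathrm{TV}(\mathbf{p},\mathbf{q})=\frac12\sum_a|\mathbf{p}[a]-\mathbf{q}[a]|$. *)

theory Defs
  imports "HOL-Analysis.Analysis" "HOL-Probability.Probability"
begin

definition mixed_strats :: "(real^'a::finite) set" where
  "mixed_strats = {x. (\<forall>a. 0 \<le> x$a) \<and> (\<Sum>a\<in>UNIV. x$a) = 1}"

definition mixu :: "('c \<Rightarrow> 'a \<Rightarrow> 'b \<Rightarrow> real) \<Rightarrow> 'c \<Rightarrow> real^'a::finite \<Rightarrow> 'b \<Rightarrow> real" where
  "mixu w z x af = (\<Sum>a\<in>UNIV. x$a * w z a af)"

definition best_resp :: "('k \<Rightarrow> 'c \<Rightarrow> 'a \<Rightarrow> 'b \<Rightarrow> real) \<Rightarrow> 'k \<Rightarrow> 'c \<Rightarrow> real^'a::finite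
     \<Rightarrow> 'b::{finite,linorder}" where
  "best_resp uf k z x = Min {af. \<forall>af'. mixu (uf k) z x af' \<le> mixu (uf k) z x af}"

definition br_region :: "('k \<Rightarrow> 'c \<Rightarrow> 'a \<Rightarrow> 'b \<Rightarrow> real) \<Rightarrow> 'c \<Rightarrow> ('k \<Rightarrow> 'b::{finite,linorder})
     \<Rightarrow> (real^'a::finite) set" where
  "br_region uf z \<sigma> = {x \<in> mixed_strats. \<forall>k. best_resp uf k z x = \<sigma> k}"

definition l1dist :: "real^'a::finite \<Rightarrow> real^'a \<Rightarrow> real" where
  "l1dist x y = (\<Sum>a\<in>UNIV. \<bar>x$a - y$a\<bar>)"

definition approx_ext :: "('k \<Rightarrow> 'c \<Rightarrow> 'a \<Rightarrow> 'b::{finite,linorder} \<Rightarrow> real) \<Rightarrow> real \<Rightarrow> 'c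
     \<Rightarrow> (real^'a::finite) set \<Rightarrow> bool" where
  "approx_ext uf \<delta> z Ez \<longleftrightarrow>
     (\<forall>\<sigma>. br_region uf z \<sigma> \<noteq> {} \<longrightarrow>
        (\<forall>x. x extreme_point_of closure (br_region uf z \<sigma>) \<longrightarrow>
           (x \<in> br_region uf z \<sigma> \<and> x \<in> Ez) \<or>
           (\<exists>x'\<in>Ez \<inter> br_region uf z \<sigma>. l1dist x' x \<le> \<delta>)))"

definition resp_prob :: "'k pmf \<Rightarrow> ('k \<Rightarrow> 'c \<Rightarrow> 'a \<Rightarrow> 'b \<Rightarrow> real) \<Rightarrow> 'c \<Rightarrow> real^'a::finite
     \<Rightarrow> 'b::{finite,linorder} \<Rightarrow> real" where
  "resp_prob F uf z x af = measure_pmf.prob F {k. best_resp uf k z x = af}"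

definition exp_util :: "'k pmf \<Rightarrow> ('c \<Rightarrow> 'a \<Rightarrow> 'b::{finite,linorder} \<Rightarrow> real) \<Rightarrow> ('k \<Rightarrow> 'c \<Rightarrow> 'a \<Rightarrow> 'b \<Rightarrow> real)
     \<Rightarrow> 'c \<Rightarrow> real^'a::finite \<Rightarrow> real" where
  "exp_util F u uf z x = measure_pmf.expectation F (\<lambda>k. mixu u z x (best_resp uf k z x))"

definition tv :: "('b::finite \<Rightarrow> real) \<Rightarrow> ('b \<Rightarrow> real) \<Rightarrow> real" where
  "tv p q = (\<Sum>a\<in>UNIV. \<bar>p a - q a\<bar>) / 2"

text \<open>Joint law of the follower sequence f_0,...,f_{T-1} (rounds 0-indexed), i.i.d. from F.\<close>
definition follower_seq :: "nat \<Rightarrow> 'k pmf \<Rightarrow> (nat \<Rightarrow> 'k) pmf" where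
  "follower_seq T F = Pi_pmf {..<T} undefined (\<lambda>_. F)"

end

theory Submission
  imports Defs
begin

text \<open>
  The played strategy pol and the comparator piE both lie in E(z_t), and pol maximises the
  estimated utility there. Since utilities lie in [0,1], swapping a true expected utility for
  its estimate costs at most twice the total variation distance between the true and the
  estimated response distributions; hence in every round
  U(piE) - U(pol) \<le> 2 (TV(piE) + TV(pol)), and adding the gap U(pistar) - U(piE), whose sum
  over the rounds is at most 1, bounds the expected regret. The realised utility of a
  commitment has the expected utility U as its mean because z_t and x_t depend on
  f_1, ..., f_(t-1) only, which are independent of f_t.
\<close>

lemma finite_set_Pi_pmf:
  assumes "finite A" and "\<And>i. i \<in> A \<Longrightarrow> finite (set_pmf (p i))"
  shows "finite (set_pmf (Pi_pmf A d p))"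
  using assms by (intro finite_subset[OF set_Pi_pmf_subset'] finite_PiE_dflt) auto

lemma expectation_pair_pmf_finite:
  fixes f :: "'a \<times> 'b \<Rightarrow> real"
  assumes p: "finite (set_pmf p)" and q: "finite (set_pmf q)"
  shows "measure_pmf.expectation (pair_pmf p q) f
       = measure_pmf.expectation q (\<lambda>y. measure_pmf.expectation p (\<lambda>x. f (x, y)))"
proof -
  have "measure_pmf.expectation (pair_pmf p q) f
      = (\<Sum>xy\<in>set_pmf p \<times> set_pmf q. pmf (pair_pmf p q) xy *\<^sub>R f xy)"
    using p q by (intro integral_measure_pmf) auto
  also have "\<dots> = (\<Sum>x\<in>set_pmf p. \<Sum>y\<in>set_pmf q. pmf p x * pmf q y * f (x, y))"
    unfolding sum.cartesian_product by (intro sum.cong refl) (auto simp: pmf_pair)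
  also have "\<dots> = (\<Sum>y\<in>set_pmf q. pmf q y * (\<Sum>x\<in>set_pmf p. pmf p x * f (x, y)))"
    by (subst sum.swap) (simp add: sum_distrib_left mult_ac)
  also have "\<dots> = measure_pmf.expectation q (\<lambda>y. measure_pmf.expectation p (\<lambda>x. f (x, y)))"
    using p q by (simp add: integral_measure_pmf[of "set_pmf p"] integral_measure_pmf[of "set_pmf q"])
  finally show ?thesis .
qed

lemma expectation_Pi_pmf_fresh_coordinate:
  fixes h :: "('i \<Rightarrow> 'a) \<Rightarrow> 'a \<Rightarrow> real"
  assumes A: "finite A" "t \<in> A" and fin: "\<And>i. i \<in> A \<Longrightarrow> finite (set_pmf (p i))"
    and fresh: "\<And>g y. h (g(t := y)) = h g"
  shows "measure_pmf.expectation (Pi_pmf A d p) (\<lambda>f. h f (f t))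
       = measure_pmf.expectation (Pi_pmf A d p) (\<lambda>f. measure_pmf.expectation (p t) (h f))"
proof -
  define Q where "Q = Pi_pmf (A - {t}) d p"
  have Pi: "Pi_pmf A d p = map_pmf (\<lambda>(y, g). g(t := y)) (pair_pmf (p t) Q)"
    using A Pi_pmf_insert[of "A - {t}" t d p] by (simp add: Q_def insert_absorb)
  have "finite (set_pmf Q)"
    unfolding Q_def using A fin by (intro finite_set_Pi_pmf) auto
  then have "measure_pmf.expectation (pair_pmf (p t) Q) (\<lambda>(y, g). h g y)
           = measure_pmf.expectation Q (\<lambda>g. measure_pmf.expectation (p t) (h g))"
    using A fin by (subst expectation_pair_pmf_finite) auto
  then show ?thesis
    using expectation_pair_pmf_snd[where f="\<lambda>g. measure_pmf.expectation (p t) (h g)" and p="p t" and q=Q]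
    by (simp add: Pi fresh case_prod_unfold)
qed

lemma mixu_bounded:
  assumes "x \<in> mixed_strats" and "\<And>a af. 0 \<le> w z a af \<and> w z a af \<le> 1"
  shows "0 \<le> mixu w z x af \<and> mixu w z x af \<le> 1"
proof -
  have x: "\<And>a. 0 \<le> x$a" "(\<Sum>a\<in>UNIV. x$a) = 1"
    using assms(1) by (auto simp: mixed_strats_def)
  have "0 \<le> mixu w z x af"
    unfolding mixu_def using x assms(2) by (auto intro!: sum_nonneg)
  moreover have "mixu w z x af \<le> (\<Sum>a\<in>UNIV. x$a)"
    unfolding mixu_def using x assms(2) by (intro sum_mono) (simp add: mult_left_le)
  ultimately show ?thesis
    using x by simp
qed

lemma exp_util_eq_sum_resp_prob:
  "exp_util F u uf z x = (\<Sum>af\<in>UNIV. mixu u z x af * resp_prob F uf z x af)"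
proof -
  have "exp_util F u uf z x
      = measure_pmf.expectation (map_pmf (\<lambda>k. best_resp uf k z x) F) (mixu u z x)"
    unfolding exp_util_def by simp
  also have "\<dots> = (\<Sum>af\<in>UNIV. pmf (map_pmf (\<lambda>k. best_resp uf k z x) F) af *\<^sub>R mixu u z x af)"
    by (rule integral_measure_pmf) auto
  finally show ?thesis
    by (simp add: pmf_map resp_prob_def vimage_def mult.commute)
qed

lemma exp_util_estimate_error_le_tv:
  assumes "x \<in> mixed_strats" and "\<And>a af. 0 \<le> u z a af \<and> u z a af \<le> 1"
  shows "\<bar>exp_util F u uf z x - (\<Sum>af\<in>UNIV. mixu u z x af * q af)\<bar>
         \<le> 2 * tv (resp_prob F uf z x) q"
proof -
  have "\<bar>exp_util F u uf z x - (\<Sum>af\<in>UNIV. mixu u z x af * q af)\<bar>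
      = \<bar>\<Sum>af\<in>UNIV. mixu u z x af * (resp_prob F uf z x af - q af)\<bar>"
    by (simp add: exp_util_eq_sum_resp_prob sum_subtractf[symmetric] right_diff_distrib)
  also have "\<dots> \<le> (\<Sum>af\<in>UNIV. \<bar>mixu u z x af\<bar> * \<bar>resp_prob F uf z x af - q af\<bar>)"
    unfolding abs_mult[symmetric] by (rule sum_abs)
  also have "\<dots> \<le> (\<Sum>af\<in>UNIV. \<bar>resp_prob F uf z x af - q af\<bar>)"
    using mixu_bounded[of x u z, OF assms] by (intro sum_mono mult_left_le_one_le) auto
  finally show ?thesis
    by (simp add: tv_def)
qed

lemma exp_util_diff_le_tv_if_estimate_le:
  assumes "x \<in> mixed_strats" "y \<in> mixed_strats"
    and "\<And>a af. 0 \<le> u z a af \<and> u z a af \<le> 1"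
    and "(\<Sum>af\<in>UNIV. mixu u z x af * q x af) \<le> (\<Sum>af\<in>UNIV. mixu u z y af * q y af)"
  shows "exp_util F u uf z x - exp_util F u uf z y
         \<le> 2 * (tv (resp_prob F uf z x) (q x) + tv (resp_prob F uf z y) (q y))"
  using exp_util_estimate_error_le_tv[of x u z F uf "q x", OF assms(1,3)]
    exp_util_estimate_error_le_tv[of y u z F uf "q y", OF assms(2,3)] assms(4)
  unfolding abs_le_iff by argo

lemma expectation_follower_seq_realized_utility:
  fixes F :: "'k::finite pmf"
  assumes "t < T" and "\<And>g k. z (g(t := k)) = z g" and "\<And>g k. x (g(t := k)) = x g"
  shows "measure_pmf.expectation (follower_seq T F)
           (\<lambda>fs. mixu u (z fs) (x fs) (best_resp uf (fs t) (z fs) (x fs)))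
       = measure_pmf.expectation (follower_seq T F) (\<lambda>fs. exp_util F u uf (z fs) (x fs))"
  unfolding follower_seq_def exp_util_def using assms
  by (intro expectation_Pi_pmf_fresh_coordinate
        [where h="\<lambda>g k. mixu u (z g) (x g) (best_resp uf k (z g) (x g))"]) auto

lemma expected_regret_le_gap_plus_tv:
  fixes F :: "'k::finite pmf"
    and z :: "nat \<Rightarrow> (nat \<Rightarrow> 'k) \<Rightarrow> 'c"
    and xs xe xp :: "nat \<Rightarrow> (nat \<Rightarrow> 'k) \<Rightarrow> real^'a::finite"
    and q :: "nat \<Rightarrow> (nat \<Rightarrow> 'k) \<Rightarrow> real^'a \<Rightarrow> 'b::{finite,linorder} \<Rightarrow> real"
  assumes z_hist: "\<And>t fs gs. \<forall>s<t. fs s = gs s \<Longrightarrow> z t fs = z t gs"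
    and xs_hist: "\<And>t fs gs. \<forall>s<t. fs s = gs s \<Longrightarrow> xs t fs = xs t gs"
    and xp_hist: "\<And>t fs gs. \<forall>s<t. fs s = gs s \<Longrightarrow> xp t fs = xp t gs"
    and u_bounded: "\<And>t fs a af. 0 \<le> u (z t fs) a af \<and> u (z t fs) a af \<le> 1"
    and xe_simplex: "\<And>t fs. xe t fs \<in> mixed_strats"
    and xp_simplex: "\<And>t fs. xp t fs \<in> mixed_strats"
    and greedy: "\<And>t fs. (\<Sum>af\<in>UNIV. mixu u (z t fs) (xe t fs) af * q t fs (xe t fs) af)
                        \<le> (\<Sum>af\<in>UNIV. mixu u (z t fs) (xp t fs) af * q t fs (xp t fs) af)"
    and gap: "\<And>fs. fs \<in> set_pmf (follower_seq T F) \<Longrightarrow>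
                (\<Sum>t<T. exp_util F u uf (z t fs) (xs t fs) - exp_util F u uf (z t fs) (xe t fs)) \<le> 1"
  shows "measure_pmf.expectation (follower_seq T F)
           (\<lambda>fs. \<Sum>t<T. mixu u (z t fs) (xs t fs) (best_resp uf (fs t) (z t fs) (xs t fs))
                        - mixu u (z t fs) (xp t fs) (best_resp uf (fs t) (z t fs) (xp t fs)))
         \<le> 1 + 2 * (\<Sum>t<T. measure_pmf.expectation (follower_seq T F)
              (\<lambda>fs. tv (resp_prob F uf (z t fs) (xe t fs)) (q t fs (xe t fs))
                  + tv (resp_prob F uf (z t fs) (xp t fs)) (q t fs (xp t fs))))"
proof -
  define P where "P = follower_seq T F"
  have integrable_P: "\<And>f :: (nat \<Rightarrow> 'k) \<Rightarrow> real. integrable P f"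
    unfolding P_def follower_seq_def by (intro integrable_measure_pmf_finite finite_set_Pi_pmf) auto
  define U where "U t fs x = exp_util F u uf (z t fs) x" for t fs x
  define TV where "TV t fs = tv (resp_prob F uf (z t fs) (xe t fs)) (q t fs (xe t fs))
                  + tv (resp_prob F uf (z t fs) (xp t fs)) (q t fs (xp t fs))" for t fs
  have realized: "measure_pmf.expectation P
           (\<lambda>fs. mixu u (z t fs) (xs t fs) (best_resp uf (fs t) (z t fs) (xs t fs))
                - mixu u (z t fs) (xp t fs) (best_resp uf (fs t) (z t fs) (xp t fs)))
      = measure_pmf.expectation P (\<lambda>fs. U t fs (xs t fs) - U t fs (xp t fs))" if "t < T" for t
  proof -
    have "\<forall>s<t. (g(t := k)) s = g s" for g :: "nat \<Rightarrow> 'k" and k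
      by simp
    then have "z t (g(t := k)) = z t g" "xs t (g(t := k)) = xs t g" "xp t (g(t := k)) = xp t g"
      for g k
      using z_hist xs_hist xp_hist by blast+
    then show ?thesis
      unfolding P_def U_def using \<open>t < T\<close>
      by (simp add: Bochner_Integration.integral_diff integrable_P[unfolded P_def]
          expectation_follower_seq_realized_utility)
  qed
  have pointwise: "U t fs (xs t fs) - U t fs (xp t fs)
                   \<le> (U t fs (xs t fs) - U t fs (xe t fs)) + 2 * TV t fs" for t fs
    using exp_util_diff_le_tv_if_estimate_le[of "xe t fs" "xp t fs" u "z t fs" "q t fs" F uf]
      xe_simplex xp_simplex u_bounded greedy
    unfolding U_def TV_def by auto
  have expected_gap: "measure_pmf.expectation P (\<lambda>fs. \<Sum>t<T. U t fs (xs t fs) - U t fs (xe t fs)) \<le> 1"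
    using gap unfolding P_def U_def
    by (intro measure_pmf.integral_le_const integrable_P[unfolded P_def]) (simp add: AE_measure_pmf_iff)
  have "measure_pmf.expectation P
          (\<lambda>fs. \<Sum>t<T. mixu u (z t fs) (xs t fs) (best_resp uf (fs t) (z t fs) (xs t fs))
                      - mixu u (z t fs) (xp t fs) (best_resp uf (fs t) (z t fs) (xp t fs)))
      = (\<Sum>t<T. measure_pmf.expectation P (\<lambda>fs. U t fs (xs t fs) - U t fs (xp t fs)))"
    by (subst Bochner_Integration.integral_sum[OF integrable_P]) (intro sum.cong refl realized, simp)
  also have "\<dots> \<le> (\<Sum>t<T. measure_pmf.expectation P
                        (\<lambda>fs. (U t fs (xs t fs) - U t fs (xe t fs)) + 2 * TV t fs))"
    by (intro sum_mono integral_mono integrable_P pointwise)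
  also have "\<dots> = measure_pmf.expectation P (\<lambda>fs. \<Sum>t<T. U t fs (xs t fs) - U t fs (xe t fs))
                  + 2 * (\<Sum>t<T. measure_pmf.expectation P (TV t))"
    by (simp add: Bochner_Integration.integral_add Bochner_Integration.integral_sum integrable_P
        sum.distrib sum_distrib_left)
  also have "\<dots> \<le> 1 + 2 * (\<Sum>t<T. measure_pmf.expectation P (TV t))"
    using expected_gap by simp
  finally show ?thesis
    unfolding P_def TV_def .
qed

theorem mainTheorem3:
  fixes u :: "real^'d \<Rightarrow> 'a::finite \<Rightarrow> 'b::{finite,linorder} \<Rightarrow> real"
    and uf :: "'k::finite \<Rightarrow> real^'d \<Rightarrow> 'a \<Rightarrow> 'b \<Rightarrow> real"
    and Z :: "(real^'d) set" and T :: nat and \<delta> :: real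
    and E :: "real^'d \<Rightarrow> (real^'a) set"
    and F :: "'k pmf"
    and adv :: "nat \<Rightarrow> (nat \<Rightarrow> 'k) \<Rightarrow> real^'d"
    and phat :: "nat \<Rightarrow> (nat \<Rightarrow> 'k) \<Rightarrow> real^'d \<Rightarrow> real^'a \<Rightarrow> 'b \<Rightarrow> real"
    and pol :: "nat \<Rightarrow> (nat \<Rightarrow> 'k) \<Rightarrow> real^'d \<Rightarrow> real^'a"
    and pistar piE :: "real^'d \<Rightarrow> real^'a"
  assumes K_le_T: "CARD('k) \<le> T"
    and delta: "\<delta> \<le> 1 / real T"
    and u_range: "\<forall>z\<in>Z. \<forall>a af. 0 \<le> u z a af \<and> u z a af \<le> 1"
    and uf_range: "\<forall>k. \<forall>z\<in>Z. \<forall>a af. 0 \<le> uf k z a af \<and> uf k z a af \<le> 1"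
    and E_ext: "\<forall>z\<in>Z. E z \<subseteq> mixed_strats \<and> approx_ext uf \<delta> z (E z)"
    and adv_Z: "\<forall>t fs. adv t fs \<in> Z"
    and adv_hist: "\<forall>t fs gs. (\<forall>s<t. fs s = gs s) \<longrightarrow> adv t fs = adv t gs"
    and phat_hist: "\<forall>t fs gs. (\<forall>s<t. fs s = gs s) \<longrightarrow> phat t fs = phat t gs"
    and phat_nonneg: "\<forall>t fs z x af. 0 \<le> phat t fs z x af"
    and phat_sum: "\<forall>t fs z x. (\<Sum>af\<in>UNIV. phat t fs z x af) = 1"
    and pol_hist: "\<forall>t fs gs. (\<forall>s<t. fs s = gs s) \<longrightarrow> pol t fs = pol t gs"
    and pol_argmax: "\<forall>t fs. \<forall>z\<in>Z. pol t fs z \<in> E z \<and>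
          (\<forall>x\<in>E z. (\<Sum>af\<in>UNIV. mixu u z x af * phat t fs z x af)
                   \<le> (\<Sum>af\<in>UNIV. mixu u z (pol t fs z) af * phat t fs z (pol t fs z) af))"
    and pistar_simplex: "\<forall>z\<in>Z. pistar z \<in> mixed_strats"
    and pistar_opt: "\<forall>fs\<in>set_pmf (follower_seq T F). \<forall>\<pi>. (\<forall>z\<in>Z. \<pi> z \<in> mixed_strats) \<longrightarrow>
          (\<Sum>t<T. exp_util F u uf (adv t fs) (\<pi> (adv t fs)))
            \<le> (\<Sum>t<T. exp_util F u uf (adv t fs) (pistar (adv t fs)))"
    and piE_E: "\<forall>z\<in>Z. piE z \<in> E z"
    and piE_gap: "\<forall>fs\<in>set_pmf (follower_seq T F).
          (\<Sum>t<T. exp_util F u uf (adv t fs) (pistar (adv t fs))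
                 - exp_util F u uf (adv t fs) (piE (adv t fs))) \<le> 1"
  shows "measure_pmf.expectation (follower_seq T F)
           (\<lambda>fs. \<Sum>t<T. mixu u (adv t fs) (pistar (adv t fs))
                            (best_resp uf (fs t) (adv t fs) (pistar (adv t fs)))
                        - mixu u (adv t fs) (pol t fs (adv t fs))
                            (best_resp uf (fs t) (adv t fs) (pol t fs (adv t fs))))
         \<le> 1 + 2 * (\<Sum>t<T. measure_pmf.expectation (follower_seq T F)
              (\<lambda>fs. tv (resp_prob F uf (adv t fs) (piE (adv t fs)))
                        (phat t fs (adv t fs) (piE (adv t fs)))
                  + tv (resp_prob F uf (adv t fs) (pol t fs (adv t fs)))
                        (phat t fs (adv t fs) (pol t fs (adv t fs)))))"
proof (rule expected_regret_le_gap_plus_tv)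
  fix t :: nat and fs gs :: "nat \<Rightarrow> 'k"
  assume "\<forall>s<t. fs s = gs s"
  then show "adv t fs = adv t gs" "pistar (adv t fs) = pistar (adv t gs)"
    "pol t fs (adv t fs) = pol t gs (adv t gs)"
    using adv_hist pol_hist by metis+
next
  fix t :: nat and fs :: "nat \<Rightarrow> 'k"
  have adv_in_Z: "adv t fs \<in> Z"
    using adv_Z by blast
  then show "0 \<le> u (adv t fs) a af \<and> u (adv t fs) a af \<le> 1" for a af
    using u_range by blast
  show "piE (adv t fs) \<in> mixed_strats" "pol t fs (adv t fs) \<in> mixed_strats"
    using adv_in_Z E_ext piE_E pol_argmax by blast+
  show "(\<Sum>af\<in>UNIV. mixu u (adv t fs) (piE (adv t fs)) af * phat t fs (adv t fs) (piE (adv t fs)) af)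
     \<le> (\<Sum>af\<in>UNIV. mixu u (adv t fs) (pol t fs (adv t fs)) af
            * phat t fs (adv t fs) (pol t fs (adv t fs)) af)"
    using adv_in_Z piE_E pol_argmax by blast
qed (use piE_gap in blast)

end
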